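(* For $n\in\{2,3\}$ let $N$ be the $n\times n$ matrix with $N_{i,i+1}=1$ and all other entries zero, and let $N^*=N^T$. For every integer $d\ge1$, the kernel of $\mathrm{ad}_{N^*}$ acting on $F^2_d$ (for $n=2$) has dimension $2$, and the kernel of $\mathrm{ad}_{N^*}$ acting on $F^3_d$ (for $n=3$) has dimension $\lceil 3d/2+1\rceil$.
   Context: $F^n_d$ is the space of vector fields $h:\mathbb{R}^n\to\mathbb{R}^n$ whose components are real homogeneous polynomials of degree $d$. For a matrix $A$, $\mathrm{ad}_A h(\xi)=Dh(\xi)A\xi-Ah(\xi)$ (the Lie bracket $[A\xi,h]$). *)

theory Defs
  imports "HOL-Analysis.Analysis" "HOL-Library.Function_Algebras"
begin

text \<open>Pointwise scalar multiplication on vector fields; together with the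
pointwise addition from Function_Algebras this makes functions into a real
vector space (used via the locale vector_space).\<close>
definition fscale :: "real \<Rightarrow> ('a \<Rightarrow> 'b::real_vector) \<Rightarrow> 'a \<Rightarrow> 'b" where
  "fscale c f = (\<lambda>x. c *\<^sub>R f x)"

definition hom_poly :: "nat \<Rightarrow> (real^'n \<Rightarrow> real) \<Rightarrow> bool" where
  "hom_poly d p \<longleftrightarrow> (\<exists>c :: ('n \<Rightarrow> nat) \<Rightarrow> real.
      p = (\<lambda>x. \<Sum>\<alpha>\<in>{\<alpha>. (\<Sum>i\<in>UNIV. \<alpha> i) = d}. c \<alpha> * (\<Prod>i\<in>UNIV. (x $ i) ^ \<alpha> i)))"

definition Fhom :: "nat \<Rightarrow> (real^'n \<Rightarrow> real^'n) set" where
  "Fhom d = {h. \<forall>j. hom_poly d (\<lambda>x. h x $ j)}"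

definition ad :: "real^'n^'n \<Rightarrow> (real^'n \<Rightarrow> real^'n) \<Rightarrow> real^'n \<Rightarrow> real^'n" where
  "ad A h = (\<lambda>\<xi>. frechet_derivative h (at \<xi>) (A *v \<xi>) - A *v h \<xi>)"

definition ad_kernel :: "real^'n^'n \<Rightarrow> nat \<Rightarrow> (real^'n \<Rightarrow> real^'n) set" where
  "ad_kernel A d = {h \<in> Fhom d. ad A h = (\<lambda>_. 0)}"

definition N2 :: "real^2^2" where
  "N2 = (\<chi> i j. if i = 1 \<and> j = 2 then 1 else 0)"

definition N3 :: "real^3^3" where
  "N3 = (\<chi> i j. if (i = 1 \<and> j = 2) \<or> (i = 2 \<and> j = 3) then 1 else 0)"

end

theory Submission
  imports Defs "HOL-Computational_Algebra.Polynomial"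
begin

text \<open>For A = N^T one has A^3 = 0, so the flow of the linear field A xi is
exp(tA) = I + tA + t^2 A^2 / 2, and h lies in the kernel of ad_A iff h commutes with
this flow. For n = 2 every point with xi_1 \<noteq> 0 lies on the orbit of xi_1 e_1, so by
homogeneity an equivariant h is determined by h(e_1), which can be prescribed freely.
For n = 3 the flow preserves xi_1 and q = xi_2^2 - 2 xi_1 xi_3, and every point with
xi_1 \<noteq> 0 lies on the orbit of a multiple of some (1, 0, s); so h is determined by the
polynomials P_i(s) = h(1, 0, s)_i. Since (x, 1, 0) lies on the orbit of
x (1, 0, -1/(2x^2)), polynomiality of h along the line (x, 1, 0) forces
2 deg P_1 < d, 2 deg P_2 < d and 2 deg (P_3 - s P_1) \<le> d; the fields
xi_1^(d-1-2j) q^j xi, xi_1^(d-1-2j) q^j A xi and xi_1^(d-2j) q^j e_3 realise every such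
triple, which gives 2 (\<lfloor>(d-1)/2\<rfloor> + 1) + \<lfloor>d/2\<rfloor> + 1 = \<lceil>3d/2 + 1\<rceil> dimensions.\<close>

section \<open>Dimension from coordinate functionals\<close>

lemma vector_space_fscale:
  "vector_space (fscale :: real \<Rightarrow> ('a \<Rightarrow> 'b::real_vector) \<Rightarrow> 'a \<Rightarrow> 'b)"
  by unfold_locales (auto simp: fscale_def fun_eq_iff algebra_simps)

context vector_space
begin

lemma coordinate_of_combination:
  fixes b :: "'i \<Rightarrow> 'b" and L :: "'b \<Rightarrow> 'i \<Rightarrow> 'a"
  assumes V: "subspace V" and I: "finite I"
    and bV: "\<And>i. i \<in> I \<Longrightarrow> b i \<in> V"
    and Ladd: "\<And>x y i. x \<in> V \<Longrightarrow> y \<in> V \<Longrightarrow> L (x + y) i = L x i + L y i"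
    and Lscale: "\<And>x r i. x \<in> V \<Longrightarrow> L (r *s x) i = r * L x i"
    and Lb: "\<And>i j. i \<in> I \<Longrightarrow> j \<in> I \<Longrightarrow> L (b j) i = (if i = j then c i else 0)"
    and i: "i \<in> I"
  shows "L (\<Sum>j\<in>I. u j *s b j) i = u i * c i"
proof -
  have L0: "L 0 i = 0" for i
    using Lscale[OF subspace_0[OF V], of 0 i] by simp
  have Lsum: "L (\<Sum>j\<in>J. f j) i = (\<Sum>j\<in>J. L (f j) i)"
    if "finite J" "\<And>j. j \<in> J \<Longrightarrow> f j \<in> V" for J f
    using that
  proof (induction J rule: finite_induct)
    case (insert x F)
    have "sum f F \<in> V" using insert by (intro subspace_sum[OF V]) auto
    then show ?case using insert by (simp add: Ladd)
  qed (simp add: L0)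
  have "L (\<Sum>j\<in>I. u j *s b j) i = (\<Sum>j\<in>I. L (u j *s b j) i)"
    using bV by (intro Lsum I) (auto intro: subspace_scale[OF V])
  also have "\<dots> = (\<Sum>j\<in>I. u j * (if i = j then c i else 0))"
    using bV Lb i by (intro sum.cong) (auto simp: Lscale)
  also have "\<dots> = u i * c i" using i I by (simp add: if_distrib cong: if_cong)
  finally show ?thesis .
qed

lemma dim_eq_card_if_coordinates:
  fixes b :: "'i \<Rightarrow> 'b" and L :: "'b \<Rightarrow> 'i \<Rightarrow> 'a" and c :: "'i \<Rightarrow> 'a"
  assumes V: "subspace V" and I: "finite I"
    and bV: "\<And>i. i \<in> I \<Longrightarrow> b i \<in> V"
    and Ladd: "\<And>x y i. x \<in> V \<Longrightarrow> y \<in> V \<Longrightarrow> L (x + y) i = L x i + L y i"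
    and Lscale: "\<And>x r i. x \<in> V \<Longrightarrow> L (r *s x) i = r * L x i"
    and Lb: "\<And>i j. i \<in> I \<Longrightarrow> j \<in> I \<Longrightarrow> L (b j) i = (if i = j then c i else 0)"
    and c: "\<And>i. i \<in> I \<Longrightarrow> c i \<noteq> 0"
    and inj: "\<And>x. x \<in> V \<Longrightarrow> (\<forall>i\<in>I. L x i = 0) \<Longrightarrow> x = 0"
  shows "dim V = card I"
proof -
  have comb: "L (\<Sum>j\<in>I. u j *s b j) i = u i * c i" if "i \<in> I" for u i
    by (rule coordinate_of_combination[where b=b and L=L]) (use V I bV Ladd Lscale Lb that in auto)
  have injb: "inj_on b I"
    by (rule inj_onI) (metis Lb c)
  show ?thesis
  proof (rule dim_unique[of "b ` I"])
    show "b ` I \<subseteq> V" using bV by auto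
    show "card (b ` I) = card I" using injb by (rule card_image)
    show "independent (b ` I)"
    proof
      assume "dependent (b ` I)"
      then obtain u where u: "\<exists>v\<in>b ` I. u v \<noteq> 0" "(\<Sum>v\<in>b ` I. u v *s v) = 0"
        using dependent_finite[of "b ` I"] I by auto
      have "(\<Sum>j\<in>I. u (b j) *s b j) = 0"
        using u(2) by (simp add: sum.reindex[OF injb])
      then have "u (b i) * c i = 0" if "i \<in> I" for i
        using comb[OF that, of "\<lambda>j. u (b j)"] Lscale[OF subspace_0[OF V], of 0 i] by simp
      then show False using u(1) c by auto
    qed
    show "V \<subseteq> span (b ` I)"
    proof
      fix x assume x: "x \<in> V"
      define s where "s = (\<Sum>j\<in>I. (L x j / c j) *s b j)"
      have sV: "s \<in> V" unfolding s_def using bV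
        by (intro subspace_sum[OF V] subspace_scale[OF V]) auto
      have "L (x + (-1) *s s) i = 0" if "i \<in> I" for i
        using Ladd[OF x subspace_scale[OF V sV]] Lscale[OF sV, of "-1" i] comb[OF that] c[OF that]
        by (simp add: s_def del: scale_minus_left)
      then have "x + (-1) *s s = 0"
        using inj x sV by (meson subspace_add subspace_scale V)
      then have "x = s" by (simp add: algebra_simps)
      moreover have "s \<in> span (b ` I)" unfolding s_def
        by (intro span_sum span_scale span_base) auto
      ultimately show "x \<in> span (b ` I)" by simp
    qed
  qed
qed

end

section \<open>Homogeneous polynomials\<close>

definition exponents :: "nat \<Rightarrow> ('n::finite \<Rightarrow> nat) set" where
  "exponents d = {\<alpha>. (\<Sum>i\<in>UNIV. \<alpha> i) = d}"

definition monomial :: "('n::finite \<Rightarrow> nat) \<Rightarrow> real^'n \<Rightarrow> real" where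
  "monomial \<alpha> x = (\<Prod>i\<in>UNIV. (x $ i) ^ \<alpha> i)"

lemma hom_poly_iff: "hom_poly d p \<longleftrightarrow> (\<exists>c. p = (\<lambda>x. \<Sum>\<alpha>\<in>exponents d. c \<alpha> * monomial \<alpha> x))"
  unfolding hom_poly_def exponents_def monomial_def ..

lemma finite_exponents: "finite (exponents d :: ('n::finite \<Rightarrow> nat) set)"
proof -
  have "exponents d \<subseteq> {f. \<forall>x. (x \<in> (UNIV::'n set) \<longrightarrow> f x \<in> {..d}) \<and> (x \<notin> UNIV \<longrightarrow> f x = 0)}"
    unfolding exponents_def by (auto intro!: member_le_sum[where A=UNIV, simplified])
  then show ?thesis by (rule finite_subset) (intro finite_set_of_finite_funs; simp)
qed

lemma monomial_add: "monomial (\<alpha> + \<beta>) x = monomial \<alpha> x * monomial \<beta> x"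
  unfolding monomial_def by (simp add: power_add prod.distrib)

lemma monomial_scaleR: "monomial \<alpha> (r *\<^sub>R x) = r ^ (\<Sum>i\<in>UNIV. \<alpha> i) * monomial \<alpha> x"
  unfolding monomial_def by (simp add: power_mult_distrib prod.distrib power_sum)

lemma hom_poly_zero: "hom_poly d (\<lambda>x. 0)"
  unfolding hom_poly_iff by (auto intro!: exI[of _ "\<lambda>\<alpha>. 0"])

lemma hom_poly_add: "hom_poly d p \<Longrightarrow> hom_poly d q \<Longrightarrow> hom_poly d (\<lambda>x. p x + q x)"
proof -
  assume "hom_poly d p" "hom_poly d q"
  then obtain c c' where "p = (\<lambda>x. \<Sum>\<alpha>\<in>exponents d. c \<alpha> * monomial \<alpha> x)"
    "q = (\<lambda>x. \<Sum>\<alpha>\<in>exponents d. c' \<alpha> * monomial \<alpha> x)"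
    unfolding hom_poly_iff by blast
  then show ?thesis unfolding hom_poly_iff
    by (intro exI[of _ "\<lambda>\<alpha>. c \<alpha> + c' \<alpha>"]) (simp add: distrib_right sum.distrib)
qed

lemma hom_poly_cmult: "hom_poly d p \<Longrightarrow> hom_poly d (\<lambda>x. r * p x)"
proof -
  assume "hom_poly d p"
  then obtain c where "p = (\<lambda>x. \<Sum>\<alpha>\<in>exponents d. c \<alpha> * monomial \<alpha> x)"
    unfolding hom_poly_iff by blast
  then show ?thesis unfolding hom_poly_iff
    by (intro exI[of _ "\<lambda>\<alpha>. r * c \<alpha>"]) (simp add: sum_distrib_left mult.assoc)
qed

lemma hom_poly_diff: "hom_poly d p \<Longrightarrow> hom_poly d q \<Longrightarrow> hom_poly d (\<lambda>x. p x - q x)"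
  using hom_poly_add[of d p "\<lambda>x. (-1) * q x"] hom_poly_cmult[of d q "-1"] by simp

lemma hom_poly_const: "hom_poly 0 (\<lambda>x. r)"
proof -
  have e: "exponents 0 = {\<lambda>_. 0}" unfolding exponents_def by auto
  show ?thesis unfolding hom_poly_iff e by (auto intro!: exI[of _ "\<lambda>\<alpha>. r"] simp: monomial_def)
qed

lemma hom_poly_component: "hom_poly 1 (\<lambda>x. x $ j)"
proof -
  define \<delta> where "\<delta> = (\<lambda>i. if i = j then 1 else 0::nat)"
  have \<delta>: "\<delta> \<in> exponents 1" unfolding exponents_def \<delta>_def by simp
  have "monomial \<delta> x = (\<Prod>i\<in>UNIV. if i = j then x $ i else 1)" for x
    unfolding monomial_def \<delta>_def by (intro prod.cong) auto
  then have m: "monomial \<delta> x = x $ j" for x by simp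
  have "(\<Sum>\<alpha>\<in>exponents 1. (if \<alpha> = \<delta> then 1 else 0) * monomial \<alpha> x)
      = (\<Sum>\<alpha>\<in>exponents 1. if \<alpha> = \<delta> then monomial \<alpha> x else 0)" for x
    by (intro sum.cong) auto
  also have "\<dots> x = x $ j" for x
    using \<delta> by (subst sum.delta[OF finite_exponents]) (simp add: m)
  finally show ?thesis unfolding hom_poly_iff
    by (intro exI[of _ "\<lambda>\<alpha>. if \<alpha> = \<delta> then 1 else 0"]) simp
qed

lemma hom_poly_mult:
  fixes p q :: "real^'n \<Rightarrow> real"
  assumes "hom_poly a p" "hom_poly b q"
  shows "hom_poly (a + b) (\<lambda>x. p x * q x)"
proof -
  obtain c c' where p: "p = (\<lambda>x. \<Sum>\<alpha>\<in>exponents a. c \<alpha> * monomial \<alpha> x)"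
    and q: "q = (\<lambda>x. \<Sum>\<alpha>\<in>exponents b. c' \<alpha> * monomial \<alpha> x)"
    using assms unfolding hom_poly_iff by blast
  define S where "S = (exponents a :: ('n \<Rightarrow> nat) set) \<times> (exponents b :: ('n \<Rightarrow> nat) set)"
  define C where "C = (\<lambda>\<gamma>. \<Sum>ab\<in>{ab\<in>S. fst ab + snd ab = \<gamma>}. c (fst ab) * c' (snd ab))"
  have fS: "finite S" unfolding S_def by (simp add: finite_exponents)
  have img: "(\<lambda>ab. fst ab + snd ab) ` S \<subseteq> exponents (a + b)"
    unfolding S_def exponents_def by (auto simp: sum.distrib)
  have "p x * q x = (\<Sum>\<gamma>\<in>exponents (a + b). C \<gamma> * monomial \<gamma> x)" for x
  proof -
    have "p x * q x = (\<Sum>ab\<in>S. c (fst ab) * c' (snd ab) * monomial (fst ab + snd ab) x)"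
      unfolding p q S_def sum_product sum.cartesian_product
      by (intro sum.cong) (auto simp: monomial_add)
    also have "\<dots> = (\<Sum>\<gamma>\<in>exponents (a + b). \<Sum>ab\<in>{ab\<in>S. fst ab + snd ab = \<gamma>}.
        c (fst ab) * c' (snd ab) * monomial (fst ab + snd ab) x)"
      by (rule sum.group[symmetric, OF fS finite_exponents img])
    also have "\<dots> = (\<Sum>\<gamma>\<in>exponents (a + b). C \<gamma> * monomial \<gamma> x)"
      unfolding C_def sum_distrib_right by (intro sum.cong refl) auto
    finally show ?thesis .
  qed
  then show ?thesis unfolding hom_poly_iff by blast
qed

lemma hom_poly_power: "hom_poly d p \<Longrightarrow> hom_poly (k * d) (\<lambda>x. p x ^ k)"
proof (induction k)
  case 0 then show ?case using hom_poly_const[of 1] by simp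
next
  case (Suc k)
  then show ?case using hom_poly_mult[OF Suc.prems Suc.IH] by (simp add: add.commute)
qed

lemma hom_poly_scaleR: "hom_poly d p \<Longrightarrow> p (r *\<^sub>R x) = r ^ d * p x"
proof -
  assume "hom_poly d p"
  then obtain c where p: "p = (\<lambda>x. \<Sum>\<alpha>\<in>exponents d. c \<alpha> * monomial \<alpha> x)"
    unfolding hom_poly_iff by blast
  have "p (r *\<^sub>R x) = (\<Sum>\<alpha>\<in>exponents d. r ^ d * (c \<alpha> * monomial \<alpha> x))"
    unfolding p by (intro sum.cong refl) (simp add: monomial_scaleR exponents_def)
  then show ?thesis by (simp add: p sum_distrib_left)
qed

lemma hom_poly_on_line: "hom_poly d p \<Longrightarrow> \<exists>P. \<forall>s. p (u + s *\<^sub>R v) = poly P s"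
proof -
  assume "hom_poly d p"
  then obtain c where p: "p = (\<lambda>x. \<Sum>\<alpha>\<in>exponents d. c \<alpha> * monomial \<alpha> x)"
    unfolding hom_poly_iff by blast
  show ?thesis
    by (rule exI[of _ "\<Sum>\<alpha>\<in>exponents d. smult (c \<alpha>) (\<Prod>i\<in>UNIV. [:u $ i, v $ i:] ^ \<alpha> i)"])
      (simp add: p monomial_def poly_sum poly_prod poly_power)
qed

lemma hom_poly_differentiable:
  fixes p :: "real^'n \<Rightarrow> real"
  assumes "hom_poly d p" shows "p differentiable (at x)"
proof -
  have "monomial \<alpha> differentiable (at x)" for \<alpha> :: "'n \<Rightarrow> nat"
  proof -
    have "(\<lambda>x. (x $ i) ^ \<alpha> i) differentiable (at x)" for i :: 'n
      by (intro differentiable_power bounded_linear_imp_differentiable bounded_linear_vec_nth)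
    then obtain D where D: "((\<lambda>x. (x $ i) ^ \<alpha> i) has_derivative D i) (at x)" for i :: 'n
      unfolding differentiable_def by metis
    show ?thesis unfolding monomial_def differentiable_def
      by (rule exI, rule has_derivative_prod[of UNIV "\<lambda>i x. (x $ i) ^ \<alpha> i" D], rule D)
  qed
  moreover obtain c where "p = (\<lambda>x. \<Sum>\<alpha>\<in>exponents d. c \<alpha> * monomial \<alpha> x)"
    using assms unfolding hom_poly_iff by blast
  ultimately show ?thesis
    by (simp add: differentiable_sum finite_exponents differentiable_mult differentiable_const)
qed

text \<open>Along each line transversal to the hyperplane p is a univariate polynomial with
infinitely many roots.\<close>
lemma hom_poly_eq_0_if_eq_0_off_hyperplane:
  fixes p :: "real^'n \<Rightarrow> real"
  assumes "hom_poly d p" "\<And>x. x $ k \<noteq> 0 \<Longrightarrow> p x = 0"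
  shows "p x = 0"
proof -
  obtain P where P: "\<And>s. p (x + s *\<^sub>R axis k 1) = poly P s"
    using hom_poly_on_line[OF assms(1)] by blast
  have "poly P s = 0" if "s \<noteq> - (x $ k)" for s
    using assms(2) that P[of s] by (simp add: axis_def)
  then have "UNIV - {- (x $ k)} \<subseteq> {s. poly P s = 0}" by blast
  moreover have "infinite (UNIV - {- (x $ k)} :: real set)"
    by (simp add: infinite_UNIV_char_0)
  ultimately have "P = 0"
    using poly_roots_finite[of P] finite_subset by blast
  then show ?thesis using P[of 0] by simp
qed

interpretation FS: vector_space "fscale :: real \<Rightarrow> (real^'n \<Rightarrow> real^'n) \<Rightarrow> _"
  by (rule vector_space_fscale)

lemma fscale_apply: "fscale r h x = r *\<^sub>R h x"
  by (simp add: fscale_def)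

lemma Fhom_component: "h \<in> Fhom d \<Longrightarrow> hom_poly d (\<lambda>x. h x $ j)"
  unfolding Fhom_def by blast

lemma Fhom_subspace: "FS.subspace (Fhom d)"
  unfolding FS.subspace_def Fhom_def
  by (auto intro: hom_poly_zero hom_poly_add hom_poly_cmult simp: fscale_apply)

lemma Fhom_differentiable:
  assumes "h \<in> Fhom d" shows "h differentiable (at x)"
proof -
  have "(\<lambda>x. h x \<bullet> i) differentiable (at x)" if "i \<in> Basis" for i
  proof -
    obtain j where "i = axis j 1" using \<open>i \<in> Basis\<close> by (auto simp: Basis_vec_def)
    then have "(\<lambda>x. h x \<bullet> i) = (\<lambda>x. h x $ j)" by (simp add: cart_eq_inner_axis)
    then show ?thesis using hom_poly_differentiable[OF Fhom_component[OF assms]] by metis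
  qed
  then show ?thesis using differentiable_componentwise_within[of h x UNIV] by simp
qed

lemma Fhom_scaleR:
  assumes "h \<in> Fhom d" shows "h (r *\<^sub>R x) = r ^ d *\<^sub>R h x"
  using hom_poly_scaleR[OF Fhom_component[OF assms]] by (simp add: vec_eq_iff)

lemma Fhom_eq_0_if_eq_0_off_hyperplane:
  assumes "h \<in> Fhom d" "\<And>x. x $ k \<noteq> 0 \<Longrightarrow> h x = 0" shows "h = 0"
proof -
  have "h x $ j = 0" for x j
    using hom_poly_eq_0_if_eq_0_off_hyperplane[where p="\<lambda>x. h x $ j" and k=k]
      Fhom_component[OF assms(1)] assms(2) by fastforce
  then show ?thesis by (simp add: fun_eq_iff vec_eq_iff)
qed

section \<open>The flow of a matrix with vanishing cube\<close>

text \<open>The flow exp(tA) of the linear field A xi, provided A^3 = 0.\<close>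
definition nil_exp :: "real^'n^'n \<Rightarrow> real \<Rightarrow> real^'n \<Rightarrow> real^'n" where
  "nil_exp A t \<xi> = \<xi> + t *\<^sub>R (A *v \<xi>) + (t^2/2) *\<^sub>R (A *v (A *v \<xi>))"

lemma nil_exp_0 [simp]: "nil_exp A 0 \<xi> = \<xi>"
  by (simp add: nil_exp_def)

lemma nil_exp_zero [simp]: "nil_exp A t 0 = 0"
  by (simp add: nil_exp_def)

lemma nil_exp_add: "nil_exp A t (x + y) = nil_exp A t x + nil_exp A t y"
  by (simp add: nil_exp_def algebra_simps)

lemma nil_exp_scaleR: "nil_exp A t (c *\<^sub>R x) = c *\<^sub>R nil_exp A t x"
  by (simp add: nil_exp_def algebra_simps)

lemma nil_exp_commute: "A *v nil_exp A t \<xi> = nil_exp A t (A *v \<xi>)"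
  by (simp add: nil_exp_def algebra_simps)

lemma nil_exp_neg_inverse:
  assumes A3: "\<And>v. A *v (A *v (A *v v)) = 0"
  shows "nil_exp A (-t) (nil_exp A t \<xi>) = \<xi>"
proof -
  have A: "A *v nil_exp A t \<xi> = A *v \<xi> + t *\<^sub>R (A *v (A *v \<xi>))"
    using A3 by (simp add: nil_exp_def algebra_simps)
  have AA: "A *v (A *v \<xi> + t *\<^sub>R (A *v (A *v \<xi>))) = A *v (A *v \<xi>)"
    using A3 by (simp add: algebra_simps)
  show ?thesis
    unfolding nil_exp_def[of A "-t"] A AA
    by (simp add: nil_exp_def vec_eq_iff field_simps power2_eq_square)
qed

lemma has_vector_derivative_nil_exp:
  assumes A3: "\<And>v. A *v (A *v (A *v v)) = 0"
  shows "((\<lambda>t. nil_exp A t \<xi>) has_vector_derivative A *v nil_exp A t \<xi>) (at t)"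
proof -
  have "((\<lambda>t. nil_exp A t \<xi>) has_vector_derivative
      0 + 1 *\<^sub>R (A *v \<xi>) + t *\<^sub>R (A *v (A *v \<xi>))) (at t)"
    unfolding nil_exp_def
    by (intro derivative_eq_intros has_vector_derivative_scaleR) (auto intro!: derivative_eq_intros)
  moreover have "A *v nil_exp A t \<xi> = A *v \<xi> + t *\<^sub>R (A *v (A *v \<xi>))"
    using A3[of \<xi>] by (simp add: nil_exp_def algebra_simps)
  ultimately show ?thesis by simp
qed

text \<open>Uniqueness for w' = A w: the derivative of exp(-sA) w(s) vanishes.\<close>
lemma linear_ode_solution_eq_nil_exp:
  assumes A3: "\<And>v. A *v (A *v (A *v v)) = 0"
    and w: "\<And>s. (w has_vector_derivative A *v w s) (at s)"
  shows "w t = nil_exp A t (w 0)"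
proof -
  have Aw: "((\<lambda>s. A *v w s) has_vector_derivative A *v (A *v w s)) (at s)" for s
    by (rule bounded_linear.has_vector_derivative[OF matrix_vector_mul_bounded_linear[of A] w])
  have AAw: "((\<lambda>s. A *v (A *v w s)) has_vector_derivative 0) (at s)" for s
    using bounded_linear.has_vector_derivative[OF matrix_vector_mul_bounded_linear[of A] Aw[of s]] A3
    by simp
  define g where "g s = nil_exp A (-s) (w s)" for s
  have "(g has_vector_derivative
      A *v w s + ((-s) *\<^sub>R (A *v (A *v w s)) + (-1) *\<^sub>R (A *v w s))
      + (((-s)^2/2) *\<^sub>R 0 + s *\<^sub>R (A *v (A *v w s)))) (at s)" for s
    unfolding g_def nil_exp_def
    by (intro has_vector_derivative_add w has_vector_derivative_scaleR Aw AAw)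
      (auto intro!: derivative_eq_intros)
  then have "(g has_derivative (\<lambda>_. 0)) (at s within UNIV)" for s
    by (simp add: has_vector_derivative_def algebra_simps)
  then obtain c where "\<forall>s\<in>UNIV. g s = c"
    using has_derivative_zero_constant[OF convex_UNIV] by blast
  then have "nil_exp A (-t) (w t) = w 0" by (metis g_def nil_exp_0 minus_zero UNIV_I)
  then show ?thesis
    using nil_exp_neg_inverse[OF A3, of "-t" "w t"] by simp
qed

lemma ad_eq_0_iff_commutes_nil_exp:
  assumes A3: "\<And>v. A *v (A *v (A *v v)) = 0" and dh: "\<And>x. h differentiable (at x)"
  shows "ad A h = (\<lambda>_. 0) \<longleftrightarrow> (\<forall>t \<xi>. h (nil_exp A t \<xi>) = nil_exp A t (h \<xi>))"
proof -
  have orbit: "((\<lambda>t. h (nil_exp A t \<xi>)) has_vector_derivative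
      frechet_derivative h (at (nil_exp A t \<xi>)) (A *v nil_exp A t \<xi>)) (at t)" for t \<xi>
    using vector_derivative_diff_chain_within[OF has_vector_derivative_nil_exp[OF A3]
        has_derivative_at_withinI[OF dh[unfolded frechet_derivative_works]]]
    by (simp add: o_def)
  show ?thesis
  proof
    assume commute: "\<forall>t \<xi>. h (nil_exp A t \<xi>) = nil_exp A t (h \<xi>)"
    show "ad A h = (\<lambda>_. 0)"
    proof
      fix \<xi>
      have "((\<lambda>t. h (nil_exp A t \<xi>)) has_vector_derivative A *v h \<xi>) (at 0)"
        using has_vector_derivative_nil_exp[OF A3, of "h \<xi>" 0] commute by simp
      then have "frechet_derivative h (at \<xi>) (A *v \<xi>) = A *v h \<xi>"
        using orbit[of \<xi> 0] vector_derivative_unique_at by fastforce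
      then show "ad A h \<xi> = 0" by (simp add: ad_def)
    qed
  next
    assume ad0: "ad A h = (\<lambda>_. 0)"
    have "frechet_derivative h (at x) (A *v x) = A *v h x" for x
      using fun_cong[OF ad0, of x] by (simp add: ad_def)
    then have "((\<lambda>t. h (nil_exp A t \<xi>)) has_vector_derivative A *v h (nil_exp A s \<xi>)) (at s)"
      for s \<xi>
      using orbit[of \<xi> s] by simp
    then have "h (nil_exp A t \<xi>) = nil_exp A t (h (nil_exp A 0 \<xi>))" for t \<xi>
      by (rule linear_ode_solution_eq_nil_exp[OF A3])
    then show "\<forall>t \<xi>. h (nil_exp A t \<xi>) = nil_exp A t (h \<xi>)" by simp
  qed
qed

definition equivariant_fields :: "real^'n^'n \<Rightarrow> nat \<Rightarrow> (real^'n \<Rightarrow> real^'n) set" where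
  "equivariant_fields A d = {h \<in> Fhom d. \<forall>t \<xi>. h (nil_exp A t \<xi>) = nil_exp A t (h \<xi>)}"

lemma ad_kernel_eq_equivariant_fields:
  assumes A3: "\<And>v. A *v (A *v (A *v v)) = 0"
  shows "ad_kernel A d = equivariant_fields A d"
  unfolding ad_kernel_def equivariant_fields_def
  using ad_eq_0_iff_commutes_nil_exp[OF A3] Fhom_differentiable by blast

lemma equivariant_fields_subspace: "FS.subspace (equivariant_fields A d)"
  using Fhom_subspace[of d]
  by (auto simp: FS.subspace_def equivariant_fields_def nil_exp_add nil_exp_scaleR fscale_apply)

lemma equivariant_field_eq_0:
  assumes h: "h \<in> equivariant_fields A d"
    and orbits: "\<And>\<xi>. \<xi> $ k \<noteq> 0 \<Longrightarrow> \<exists>t c y. \<xi> = nil_exp A t (c *\<^sub>R y) \<and> h y = 0"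
  shows "h = 0"
proof (rule Fhom_eq_0_if_eq_0_off_hyperplane)
  show hF: "h \<in> Fhom d" using h by (simp add: equivariant_fields_def)
  fix \<xi> :: "real^'a" assume "\<xi> $ k \<noteq> 0"
  then obtain t c y where \<xi>: "\<xi> = nil_exp A t (c *\<^sub>R y)" and y: "h y = 0" using orbits by blast
  have "h \<xi> = nil_exp A t (h (c *\<^sub>R y))"
    using h unfolding \<xi> equivariant_fields_def by blast
  also have "\<dots> = 0" using Fhom_scaleR[OF hF] y by simp
  finally show "h \<xi> = 0" .
qed

section \<open>Dimension two\<close>

lemma transpose_N2_mult: "transpose N2 *v \<xi> = (\<chi> i. if i = 2 then \<xi> $ 1 else 0)"
  by (simp add: vec_eq_iff matrix_vector_mult_def transpose_def N2_def sum_2 forall_2)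

lemma transpose_N2_cube: "transpose N2 *v (transpose N2 *v (transpose N2 *v v)) = 0"
  unfolding transpose_N2_mult by (simp add: vec_eq_iff forall_2)

lemma nil_exp_N2:
  "nil_exp (transpose N2) t \<xi> = (\<chi> i. if i = 1 then \<xi> $ 1 else \<xi> $ 2 + t * \<xi> $ 1)"
  unfolding nil_exp_def transpose_N2_mult by (simp add: vec_eq_iff forall_2)

definition N2_basis :: "nat \<Rightarrow> 2 \<Rightarrow> real^2 \<Rightarrow> real^2" where
  "N2_basis d i \<xi> = (if i = 1 then (\<chi> k. if k = 1 then \<xi>$1^d else \<xi>$1^(d-1) * \<xi>$2)
                     else (\<chi> k. if k = 1 then 0 else \<xi>$1^d))"

lemma N2_basis_equivariant:
  assumes d: "d \<ge> 1"
  shows "N2_basis d i \<in> equivariant_fields (transpose N2) d"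
proof -
  obtain d' where d': "d = Suc d'" using d by (cases d) auto
  have "hom_poly d (\<lambda>x::real^2. x$1^d)"
    using hom_poly_power[OF hom_poly_component, of d 1] by simp
  moreover have "hom_poly d (\<lambda>x::real^2. x$1^d' * x$2)"
    using hom_poly_mult[OF hom_poly_power[OF hom_poly_component[of 1]] hom_poly_component[of 2], of d']
      d' by simp
  ultimately have "hom_poly d (\<lambda>x. N2_basis d i x $ k)" for k
    using hom_poly_zero[of d] by (cases "i = 1"; cases "k = 1") (simp_all add: N2_basis_def d')
  moreover have "N2_basis d i (nil_exp (transpose N2) t \<xi>) = nil_exp (transpose N2) t (N2_basis d i \<xi>)"
    for t \<xi>
    unfolding N2_basis_def nil_exp_N2 by (simp add: vec_eq_iff forall_2 d' algebra_simps)
  ultimately show ?thesis by (simp add: equivariant_fields_def Fhom_def)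
qed

lemma equivariant_N2_eq_0:
  assumes h: "h \<in> equivariant_fields (transpose N2) d" and "h (axis 1 1) = 0"
  shows "h = 0"
proof (rule equivariant_field_eq_0[OF h, of 1])
  fix \<xi> :: "real^2" assume "\<xi> $ 1 \<noteq> 0"
  then have "\<xi> = nil_exp (transpose N2) (\<xi>$2 / \<xi>$1) ((\<xi> $ 1) *\<^sub>R axis 1 1)"
    unfolding nil_exp_N2 by (simp add: vec_eq_iff forall_2 axis_def)
  then show "\<exists>t c y. \<xi> = nil_exp (transpose N2) t (c *\<^sub>R y) \<and> h y = 0"
    using assms(2) by blast
qed

lemma dim_ad_kernel_N2:
  assumes d: "d \<ge> 1"
  shows "vector_space.dim fscale (ad_kernel (transpose N2) d) = 2"
proof -
  have "FS.dim (equivariant_fields (transpose N2) d) = card (UNIV :: 2 set)"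
  proof (rule FS.dim_eq_card_if_coordinates[OF equivariant_fields_subspace,
        where b = "N2_basis d" and L = "\<lambda>h i. h (axis 1 1) $ i" and c = "\<lambda>_. 1"])
    fix i j :: 2
    show "N2_basis d j (axis 1 1) $ i = (if i = j then 1 else 0)"
      using exhaust_2[of i] exhaust_2[of j] d by (auto simp: N2_basis_def axis_def)
  next
    fix h assume "h \<in> equivariant_fields (transpose N2) d" "\<forall>i\<in>UNIV. h (axis 1 1) $ i = 0"
    then show "h = 0" using equivariant_N2_eq_0 by (simp add: vec_eq_iff)
  qed (auto simp: N2_basis_equivariant[OF d] fscale_apply)
  then show ?thesis using ad_kernel_eq_equivariant_fields[OF transpose_N2_cube] by simp
qed

section \<open>A degree bound for univariate polynomials\<close>

lemma poly_eq_if_eq_on_pos: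
  fixes p q :: "real poly"
  assumes "\<And>x. x > 0 \<Longrightarrow> poly p x = poly q x"
  shows "p = q"
proof (rule ccontr)
  assume "p \<noteq> q"
  then have "finite {x. poly (p - q) x = 0}" by (intro poly_roots_finite) simp
  moreover have "{0<..} \<subseteq> {x. poly (p - q) x = 0}" using assms by auto
  ultimately show False using infinite_Ioi[of "0::real"] finite_subset by blast
qed

text \<open>x^(2M) C(c / x^2) as a polynomial in x, for deg C \<le> M.\<close>
definition clear_inv_sq :: "real \<Rightarrow> nat \<Rightarrow> real poly \<Rightarrow> real poly" where
  "clear_inv_sq c M C = (\<Sum>i\<le>M. monom (coeff C i * c^i) (2*(M-i)))"

lemma poly_clear_inv_sq:
  assumes "degree C \<le> M" "x \<noteq> 0"
  shows "poly (clear_inv_sq c M C) x = x^(2*M) * poly C (c / x^2)"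
proof -
  have summand: "x^(2*M) * (coeff C i * (c / x^2)^i) = coeff C i * c^i * x^(2*(M-i))" if "i \<le> M" for i
  proof -
    have "2*M = 2*(M-i) + 2*i" using that by simp
    then have xM: "x^(2*M) = x^(2*(M-i)) * x^(2*i)" by (metis power_add)
    have cx: "(c / x^2)^i = c^i / x^(2*i)" by (simp add: power_divide power_mult)
    have "x^(2*M) * (coeff C i * (c / x^2)^i)
        = x^(2*(M-i)) * x^(2*i) * (coeff C i * (c^i / x^(2*i)))"
      by (simp only: xM cx)
    also have "\<dots> = coeff C i * c^i * x^(2*(M-i))" using assms(2) by simp
    finally show ?thesis .
  qed
  have "poly C y = (\<Sum>i\<le>M. coeff C i * y ^ i)" for y
    using assms(1) by (simp add: poly_altdef sum.mono_neutral_left coeff_eq_0)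
  then have "x^(2*M) * poly C (c / x^2) = (\<Sum>i\<le>M. x^(2*M) * (coeff C i * (c / x^2)^i))"
    by (simp add: sum_distrib_left)
  also have "\<dots> = (\<Sum>i\<le>M. coeff C i * c^i * x^(2*(M-i)))"
    by (intro sum.cong refl summand) simp
  finally show ?thesis
    by (simp add: clear_inv_sq_def poly_sum poly_monom)
qed

lemma coeff_clear_inv_sq:
  "coeff (clear_inv_sq c M C) k =
    (if even k \<and> k \<le> 2*M then coeff C (M - k div 2) * c^(M - k div 2) else 0)"
proof -
  have "coeff (clear_inv_sq c M C) k = (\<Sum>i\<le>M. if 2*(M-i) = k then coeff C i * c^i else 0)"
    by (simp add: clear_inv_sq_def coeff_sum coeff_monom)
  also have "\<dots> = (\<Sum>i\<le>M. if even k \<and> k \<le> 2*M \<and> i = M - k div 2 then coeff C i * c^i else 0)"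
    by (intro sum.cong refl) (auto elim!: evenE)
  also have "\<dots> = (if even k \<and> k \<le> 2*M then coeff C (M - k div 2) * c^(M - k div 2) else 0)"
    by (cases "even k \<and> k \<le> 2*M") auto
  finally show ?thesis .
qed

text \<open>Comparing coefficients after multiplying by x^(2M): the top coefficients of A and B
land in degrees of opposite parity, so neither can cancel and both must lie at or above 2M.\<close>
lemma degree_bound_if_poly_eq:
  fixes r A B :: "real poly" and d :: nat
  assumes c: "c \<noteq> 0" and d: "d \<ge> 1"
    and eq: "\<And>x. x > 0 \<Longrightarrow> poly r x = x^d * poly A (c / x^2) + x^(d-1) * poly B (c / x^2)"
  shows "2 * degree A \<le> d \<and> 2 * degree B + 1 \<le> d"
proof -
  define M where "M = degree A + degree B"
  have dA: "degree A \<le> M" and dB: "degree B \<le> M" unfolding M_def by auto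
  define Q where "Q = monom 1 d * clear_inv_sq c M A + monom 1 (d-1) * clear_inv_sq c M B"
  have "monom 1 (2*M) * r = Q"
  proof (rule poly_eq_if_eq_on_pos)
    fix x :: real assume x: "x > 0"
    show "poly (monom 1 (2*M) * r) x = poly Q x"
      using eq[OF x] poly_clear_inv_sq[OF dA] poly_clear_inv_sq[OF dB] x
      by (simp add: Q_def poly_monom algebra_simps)
  qed
  then have low: "coeff Q k = 0" if "k < 2*M" for k
    using that by (metis coeff_monom_mult mult.commute mult_1 coeff_monom_Suc not_less)
  have cQ: "coeff Q k = (if k < d then 0 else coeff (clear_inv_sq c M A) (k - d))
      + (if k < d - 1 then 0 else coeff (clear_inv_sq c M B) (k - (d-1)))" for k
    by (simp add: Q_def coeff_monom_mult)
  have "2 * degree A \<le> d"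
  proof (cases "A = 0")
    case False
    let ?k = "d + 2*(M - degree A)"
    have "coeff Q ?k = lead_coeff A * c^degree A"
      using cQ[of ?k] dA d by (simp add: coeff_clear_inv_sq)
    then show ?thesis using low[of ?k] False c dA by fastforce
  qed simp
  moreover have "2 * degree B + 1 \<le> d"
  proof (cases "B = 0")
    case False
    let ?k = "d - 1 + 2*(M - degree B)"
    have "coeff Q ?k = lead_coeff B * c^degree B"
      using cQ[of ?k] dB d by (auto simp: coeff_clear_inv_sq)
    then show ?thesis using low[of ?k] False c dB d by fastforce
  qed (use d in simp)
  ultimately show ?thesis by simp
qed

section \<open>Dimension three\<close>

definition vec3 :: "real \<Rightarrow> real \<Rightarrow> real \<Rightarrow> real^3" where
  "vec3 a b c = (\<chi> i. if i = 1 then a else if i = 2 then b else c)"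

lemma vec3_nth [simp]: "vec3 a b c $ 1 = a" "vec3 a b c $ 2 = b" "vec3 a b c $ 3 = c"
  by (simp_all add: vec3_def)

lemma eq_vec3_iff: "x = vec3 a b c \<longleftrightarrow> x $ 1 = a \<and> x $ 2 = b \<and> x $ 3 = c"
  by (auto simp: vec_eq_iff forall_3)

lemma transpose_N3_mult: "transpose N3 *v \<xi> = vec3 0 (\<xi> $ 1) (\<xi> $ 2)"
  by (simp add: eq_vec3_iff matrix_vector_mult_def transpose_def N3_def sum_3)

lemma transpose_N3_cube: "transpose N3 *v (transpose N3 *v (transpose N3 *v v)) = 0"
  unfolding transpose_N3_mult by (simp add: vec_eq_iff forall_3)

lemma nil_exp_N3:
  "nil_exp (transpose N3) t \<xi> =
    vec3 (\<xi>$1) (\<xi>$2 + t * \<xi>$1) (\<xi>$3 + t * \<xi>$2 + t^2/2 * \<xi>$1)"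
  unfolding nil_exp_def transpose_N3_mult by (simp add: eq_vec3_iff)

lemma nil_exp_N3_nth_1: "nil_exp (transpose N3) t \<xi> $ 1 = \<xi> $ 1"
  by (simp add: nil_exp_N3)

lemma vec3_eq_nil_exp_slice:
  assumes "c \<noteq> 0"
  shows "vec3 c b e = nil_exp (transpose N3) (b / c) (c *\<^sub>R vec3 1 0 ((e - b^2/(2*c)) / c))"
  unfolding nil_exp_N3 using assms by (simp add: eq_vec3_iff field_simps power2_eq_square)

definition quad_inv :: "real^3 \<Rightarrow> real" where
  "quad_inv \<xi> = \<xi>$2^2 - 2 * \<xi>$1 * \<xi>$3"

lemma quad_inv_nil_exp: "quad_inv (nil_exp (transpose N3) t \<xi>) = quad_inv \<xi>"
  unfolding quad_inv_def nil_exp_N3 by (simp add: algebra_simps power2_eq_square)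

lemma hom_poly_quad_inv: "hom_poly 2 quad_inv"
proof -
  have "hom_poly 2 (\<lambda>x::real^3. x$2^2)"
    using hom_poly_power[OF hom_poly_component, of 2 2] by simp
  moreover have "hom_poly 2 (\<lambda>x::real^3. 2 * (x$1 * x$3))"
    using hom_poly_cmult[OF hom_poly_mult[OF hom_poly_component[of 1] hom_poly_component[of 3]], of 2]
    by (simp add: numeral_2_eq_2)
  ultimately show ?thesis
    using hom_poly_diff unfolding quad_inv_def by (simp add: mult.assoc)
qed

lemma hom_poly_x1_power_quad_inv: "hom_poly (e + 2*j) (\<lambda>x. x$1^e * quad_inv x ^ j)"
  using hom_poly_mult[OF hom_poly_power[OF hom_poly_component[of "1::3"]]
      hom_poly_power[OF hom_poly_quad_inv], of e j]
  by (simp add: mult.commute)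

definition slice_poly :: "(real^3 \<Rightarrow> real^3) \<Rightarrow> 3 \<Rightarrow> real poly" where
  "slice_poly h j = (SOME P. \<forall>s. h (vec3 1 0 s) $ j = poly P s)"

lemma poly_slice_poly: "h \<in> Fhom d \<Longrightarrow> h (vec3 1 0 s) $ j = poly (slice_poly h j) s"
proof -
  assume "h \<in> Fhom d"
  then obtain P where "\<forall>s. h (vec3 1 0 0 + s *\<^sub>R vec3 0 0 1) $ j = poly P s"
    using hom_poly_on_line[OF Fhom_component] by blast
  moreover have "vec3 1 0 0 + s *\<^sub>R vec3 0 0 1 = vec3 1 0 s" for s
    by (simp add: eq_vec3_iff)
  ultimately have "\<exists>P. \<forall>s. h (vec3 1 0 s) $ j = poly P s" by auto
  from someI_ex[OF this] show ?thesis unfolding slice_poly_def by blast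
qed

lemma slice_poly_eqI:
  "h \<in> Fhom d \<Longrightarrow> (\<And>s. h (vec3 1 0 s) $ j = poly Q s) \<Longrightarrow> slice_poly h j = Q"
  using poly_slice_poly[where h=h and d=d and j=j] by (metis poly_eq_poly_eq_iff ext)

lemma slice_poly_add:
  "h \<in> Fhom d \<Longrightarrow> g \<in> Fhom d \<Longrightarrow> slice_poly (h + g) j = slice_poly h j + slice_poly g j"
  using Fhom_subspace[of d] poly_slice_poly[where h=h and d=d and j=j]
    poly_slice_poly[where h=g and d=d and j=j]
  by (intro slice_poly_eqI[where d=d]) (auto simp: FS.subspace_def)

lemma slice_poly_scale: "h \<in> Fhom d \<Longrightarrow> slice_poly (fscale r h) j = smult r (slice_poly h j)"
  using Fhom_subspace[of d] poly_slice_poly[where h=h and d=d and j=j]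
  by (intro slice_poly_eqI[where d=d]) (auto simp: FS.subspace_def fscale_apply)

lemma slice_poly_degree_bounds:
  assumes d: "d \<ge> 1" and h: "h \<in> equivariant_fields (transpose N3) d"
  shows "2 * degree (slice_poly h 1) + 1 \<le> d" "2 * degree (slice_poly h 2) + 1 \<le> d"
    and "2 * degree (slice_poly h 3 - pCons 0 (slice_poly h 1)) \<le> d"
proof -
  let ?A = "transpose N3" and ?\<sigma> = "\<lambda>x::real. (-1/2) / x^2"
  have hF: "h \<in> Fhom d" using h by (simp add: equivariant_fields_def)
  let ?P = "slice_poly h"
  have orbit: "h (vec3 x 1 0) = nil_exp ?A (1/x) (x^d *\<^sub>R h (vec3 1 0 (?\<sigma> x)))" if "x > 0" for x
  proof -
    have "vec3 x 1 0 = nil_exp ?A (1/x) (x *\<^sub>R vec3 1 0 (?\<sigma> x))"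
      using vec3_eq_nil_exp_slice[of x 1 0] that by (simp add: field_simps power2_eq_square)
    then show ?thesis using h Fhom_scaleR[OF hF] by (simp add: equivariant_fields_def)
  qed
  have line: "\<exists>r. \<forall>x. h (vec3 x 1 0) $ j = poly r x" for j
  proof -
    obtain r where "\<forall>x. h (vec3 0 1 0 + x *\<^sub>R vec3 1 0 0) $ j = poly r x"
      using hom_poly_on_line[OF Fhom_component[OF hF]] by blast
    moreover have "vec3 0 1 0 + x *\<^sub>R vec3 1 0 0 = vec3 x 1 0" for x
      by (simp add: eq_vec3_iff)
    ultimately show ?thesis by auto
  qed
  have pow: "(1/x) * x^d = x^(d-1)" if "x > 0" for x :: real
    using that d by (simp add: field_simps power_eq_if)
  obtain r2 where r2: "\<And>x. h (vec3 x 1 0) $ 2 = poly r2 x" using line[of 2] by blast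
  have "poly r2 x = x^d * poly (?P 2) (?\<sigma> x) + x^(d-1) * poly (?P 1) (?\<sigma> x)" if "x > 0" for x
  proof -
    have "poly r2 x = x^d * poly (?P 2) (?\<sigma> x) + (1/x) * x^d * poly (?P 1) (?\<sigma> x)"
      using r2[of x] orbit[OF that] poly_slice_poly[OF hF] by (simp add: nil_exp_N3)
    then show ?thesis unfolding pow[OF that] .
  qed
  from degree_bound_if_poly_eq[of "-1/2" d, OF _ d this]
  show "2 * degree (?P 1) + 1 \<le> d" by simp
  obtain r3 where r3: "\<And>x. h (vec3 x 1 0) $ 3 = poly r3 x" using line[of 3] by blast
  have "poly r3 x = x^d * poly (?P 3 - pCons 0 (?P 1)) (?\<sigma> x) + x^(d-1) * poly (?P 2) (?\<sigma> x)"
    if "x > 0" for x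
  proof -
    have "poly r3 x = x^d * poly (?P 3) (?\<sigma> x) + (1/x) * x^d * poly (?P 2) (?\<sigma> x)
        + (1/x)^2/2 * x^d * poly (?P 1) (?\<sigma> x)"
      using r3[of x] orbit[OF that] poly_slice_poly[OF hF] by (simp add: nil_exp_N3)
    moreover have "(1/x)^2/2 = - ?\<sigma> x" by (simp add: power_divide)
    ultimately show ?thesis unfolding pow[OF that] by (simp add: algebra_simps)
  qed
  from degree_bound_if_poly_eq[of "-1/2" d, OF _ d this]
  show "2 * degree (?P 2) + 1 \<le> d" "2 * degree (?P 3 - pCons 0 (?P 1)) \<le> d" by simp_all
qed

definition slice_coords :: "(real^3 \<Rightarrow> real^3) \<Rightarrow> nat \<Rightarrow> real poly" where
  "slice_coords h k = (if k = 0 then slice_poly h 1 else if k = 1 then slice_poly h 2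
     else slice_poly h 3 - pCons 0 (slice_poly h 1))"

definition N3_coord :: "(real^3 \<Rightarrow> real^3) \<Rightarrow> nat \<times> nat \<Rightarrow> real" where
  "N3_coord h kj = coeff (slice_coords h (fst kj)) (snd kj)"

definition N3_index :: "nat \<Rightarrow> (nat \<times> nat) set" where
  "N3_index d = ({0, 1} \<times> {..(d-1) div 2}) \<union> ({2} \<times> {..d div 2})"

definition N3_basis :: "nat \<Rightarrow> nat \<Rightarrow> nat \<Rightarrow> real^3 \<Rightarrow> real^3" where
  "N3_basis d k j \<xi> =
    (if k = 0 then (\<xi>$1^(d-1-2*j) * quad_inv \<xi>^j) *\<^sub>R \<xi>
     else if k = 1 then (\<xi>$1^(d-1-2*j) * quad_inv \<xi>^j) *\<^sub>R (transpose N3 *v \<xi>)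
     else (\<xi>$1^(d-2*j) * quad_inv \<xi>^j) *\<^sub>R vec3 0 0 1)"

lemma N3_index_cases: "(k, j) \<in> N3_index d \<Longrightarrow> k = 0 \<or> k = 1 \<or> k = 2"
  by (auto simp: N3_index_def)

lemma N3_basis_Fhom:
  assumes d: "d \<ge> 1" and kj: "(k, j) \<in> N3_index d"
  shows "N3_basis d k j \<in> Fhom d"
  unfolding Fhom_def
proof (intro CollectI allI)
  fix i :: 3
  show "hom_poly d (\<lambda>x. N3_basis d k j x $ i)"
  proof (cases "k = 2")
    case False
    then have "d - 1 - 2*j + 2*j + 1 = d" using kj d by (auto simp: N3_index_def)
    then have "hom_poly d (\<lambda>x. x$1^(d-1-2*j) * quad_inv x ^ j * x $ l)" for l
      using hom_poly_mult[OF hom_poly_x1_power_quad_inv[of "d-1-2*j" j] hom_poly_component[of l]]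
      by simp
    then show ?thesis
      unfolding N3_basis_def transpose_N3_mult
      using False N3_index_cases[OF kj] exhaust_3[of i] hom_poly_zero[of d] by auto
  next
    case True
    then have "d - 2*j + 2*j = d" using kj by (auto simp: N3_index_def)
    then have "hom_poly d (\<lambda>x. vec3 0 0 1 $ i * (x$1^(d-2*j) * quad_inv x ^ j))"
      using hom_poly_cmult[OF hom_poly_x1_power_quad_inv[of "d-2*j" j]] by simp
    then show ?thesis by (simp add: N3_basis_def True mult.commute)
  qed
qed

lemma N3_basis_equivariant:
  assumes "d \<ge> 1" "(k, j) \<in> N3_index d"
  shows "N3_basis d k j \<in> equivariant_fields (transpose N3) d"
proof -
  have "nil_exp (transpose N3) t (vec3 0 0 1) = vec3 0 0 1" for t
    unfolding nil_exp_N3 by simp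
  then show ?thesis
    using N3_basis_Fhom[OF assms]
    by (simp add: equivariant_fields_def N3_basis_def quad_inv_nil_exp nil_exp_N3_nth_1
        nil_exp_scaleR nil_exp_commute)
qed

lemma slice_poly_N3_basis:
  assumes d: "d \<ge> 1" and kj: "(k, j) \<in> N3_index d"
  shows "slice_poly (N3_basis d k j) i =
    (if (k = 0 \<and> i = 1) \<or> (k = 1 \<and> i = 2) \<or> (k = 2 \<and> i = 3) then monom ((-2)^j) j
     else if k = 0 \<and> i = 3 then monom ((-2)^j) (Suc j) else 0)"
proof (rule slice_poly_eqI[OF N3_basis_Fhom[OF d kj]])
  fix s :: real
  have "(- (2 * s))^j = (-2)^j * s^j" by (metis mult_minus_left power_mult_distrib)
  then have "N3_basis d k j (vec3 1 0 s) = ((-2)^j * s^j) *\<^sub>R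
      (if k = 0 then vec3 1 0 s else if k = 1 then vec3 0 1 0 else vec3 0 0 1)"
    unfolding N3_basis_def transpose_N3_mult by (simp add: quad_inv_def)
  then show "N3_basis d k j (vec3 1 0 s) $ i = poly (if (k = 0 \<and> i = 1) \<or> (k = 1 \<and> i = 2) \<or>
      (k = 2 \<and> i = 3) then monom ((-2)^j) j else if k = 0 \<and> i = 3 then monom ((-2)^j) (Suc j) else 0) s"
    using N3_index_cases[OF kj] exhaust_3[of i] by (auto simp: poly_monom)
qed

lemma N3_coord_N3_basis:
  assumes d: "d \<ge> 1" and kj: "kj \<in> N3_index d" and ki: "ki \<in> N3_index d"
  shows "N3_coord (N3_basis d (fst kj) (snd kj)) ki = (if ki = kj then (-2)^(snd ki) else 0)"
proof -
  obtain k j where [simp]: "kj = (k, j)" by fastforce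
  obtain k' i where [simp]: "ki = (k', i)" by fastforce
  show ?thesis
    using N3_index_cases[of k j d] N3_index_cases[of k' i d] kj ki
    by (auto simp: N3_coord_def slice_coords_def slice_poly_N3_basis[OF d] monom_Suc coeff_monom)
qed

lemma slice_coords_add:
  "h \<in> Fhom d \<Longrightarrow> g \<in> Fhom d \<Longrightarrow> slice_coords (h + g) k = slice_coords h k + slice_coords g k"
  by (simp add: slice_coords_def slice_poly_add)

lemma slice_coords_scale: "h \<in> Fhom d \<Longrightarrow> slice_coords (fscale r h) k = smult r (slice_coords h k)"
  by (simp add: slice_coords_def slice_poly_scale smult_diff_right)

lemma equivariant_N3_eq_0:
  assumes d: "d \<ge> 1" and h: "h \<in> equivariant_fields (transpose N3) d"
    and coords: "\<forall>kj\<in>N3_index d. N3_coord h kj = 0"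
  shows "h = 0"
proof -
  have hF: "h \<in> Fhom d" using h by (simp add: equivariant_fields_def)
  note bounds = slice_poly_degree_bounds[OF d h]
  have "slice_coords h k = 0" if "k \<le> 2" for k
  proof -
    define B where "B = (if k \<le> 1 then (d-1) div 2 else d div 2)"
    have "degree (slice_coords h k) \<le> B"
      using that bounds unfolding B_def slice_coords_def by auto
    moreover have "(k, i) \<in> N3_index d" if "i \<le> B" for i
      using that \<open>k \<le> 2\<close> by (auto simp: B_def N3_index_def split: if_splits)
    ultimately have "coeff (slice_coords h k) i = 0" for i
      using bspec[OF coords, of "(k, i)"] by (cases "i \<le> B") (auto simp: N3_coord_def coeff_eq_0)
    then show ?thesis by (simp add: poly_eq_iff)
  qed
  from this[of 0] this[of 1] this[of 2]
  have "slice_poly h j = 0" for j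
    using exhaust_3[of j] by (auto simp: slice_coords_def)
  then have slice: "h (vec3 1 0 s) = 0" for s
    using poly_slice_poly[OF hF] by (simp add: vec_eq_iff)
  show ?thesis
  proof (rule equivariant_field_eq_0[OF h, of 1])
    fix \<xi> :: "real^3" assume "\<xi> $ 1 \<noteq> 0"
    moreover have "\<xi> = vec3 (\<xi>$1) (\<xi>$2) (\<xi>$3)" by (simp add: eq_vec3_iff)
    ultimately show "\<exists>t c y. \<xi> = nil_exp (transpose N3) t (c *\<^sub>R y) \<and> h y = 0"
      using vec3_eq_nil_exp_slice slice by metis
  qed
qed

lemma card_N3_index: "card (N3_index d) = 2 * ((d - 1) div 2 + 1) + (d div 2 + 1)"
proof -
  have "card (N3_index d) = card ({0, 1::nat} \<times> {..(d-1) div 2}) + card ({2::nat} \<times> {..d div 2})"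
    unfolding N3_index_def by (rule card_Un_disjoint) auto
  then show ?thesis by (simp add: card_cartesian_product)
qed

lemma dim_ad_kernel_N3:
  assumes d: "d \<ge> 1"
  shows "vector_space.dim fscale (ad_kernel (transpose N3) d) = card (N3_index d)"
proof -
  have "FS.dim (equivariant_fields (transpose N3) d) = card (N3_index d)"
  proof (rule FS.dim_eq_card_if_coordinates[OF equivariant_fields_subspace,
        where b = "\<lambda>kj. N3_basis d (fst kj) (snd kj)" and L = N3_coord and c = "\<lambda>ki. (-2)^(snd ki)"])
    show "finite (N3_index d)" by (simp add: N3_index_def)
  next
    fix x y kj
    assume "x \<in> equivariant_fields (transpose N3) d" "y \<in> equivariant_fields (transpose N3) d"
    then have "x \<in> Fhom d" "y \<in> Fhom d" by (simp_all add: equivariant_fields_def)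
    then show "N3_coord (x + y) kj = N3_coord x kj + N3_coord y kj"
      by (simp add: N3_coord_def slice_coords_add[of x d y])
  next
    fix x r kj assume "x \<in> equivariant_fields (transpose N3) d"
    then have "x \<in> Fhom d" by (simp add: equivariant_fields_def)
    then show "N3_coord (fscale r x) kj = r * N3_coord x kj"
      by (simp add: N3_coord_def slice_coords_scale[of x d])
  next
    fix x assume "x \<in> equivariant_fields (transpose N3) d" "\<forall>i\<in>N3_index d. N3_coord x i = 0"
    then show "x = 0" by (rule equivariant_N3_eq_0[OF d])
  qed (auto simp: N3_basis_equivariant[OF d] N3_coord_N3_basis[OF d])
  then show ?thesis using ad_kernel_eq_equivariant_fields[OF transpose_N3_cube] by simp
qed

lemma ceiling_three_halves:
  fixes d :: nat
  assumes "d \<ge> 1"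
  shows "\<lceil>3 * real d / 2 + 1\<rceil> = int (2 * ((d - 1) div 2 + 1) + (d div 2 + 1))"
proof (cases "even d")
  case True
  then obtain k where k: "d = 2 * k" by blast
  with assms have "k \<ge> 1" by simp
  then have "(d - 1) div 2 = k - 1" "d div 2 = k" using k by auto
  moreover have "3 * real d / 2 + 1 = of_int (int (3 * k + 1))" using k by simp
  ultimately show ?thesis using \<open>k \<ge> 1\<close>
    by (simp only: ceiling_of_int) (simp add: algebra_simps)
next
  case False
  then obtain k where k: "d = 2 * k + 1" using oddE by blast
  show ?thesis by (rule ceiling_unique) (simp_all add: k)
qed

theorem lemma5:
  fixes d :: nat
  assumes "d \<ge> 1"
  shows "vector_space.dim fscale (ad_kernel (transpose N2) d) = 2
       \<and> int (vector_space.dim fscale (ad_kernel (transpose N3) d)) = \<lceil>3 * real d / 2 + 1\<rceil>"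
  using dim_ad_kernel_N2[OF assms] dim_ad_kernel_N3[OF assms] card_N3_index[of d]
    ceiling_three_halves[OF assms]
  by simp

end
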